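(* Let $A\in\mathbb{Z}^{m\times n}$ have full column rank, let $x^*\in\mathbb{R}^n$, let $y^*\in S(A,x^* )$, let $k:=\dim S(A,y^* )$, and fix $d\in\{1,\dots,k\}$. Then there exists a $d$-dimensional face of $S(A,y^* )$ containing $y^*$ that intersects some $(k-d)$-dimensional face of $S(A,y^* )$ containing $0$.
   Context: With rows $a_1^\top,\dots,a_m^\top$ of $A$, for $x^*\in\mathbb{R}^n$ define the cone $C(A,x^* )=\{x\in\mathbb{R}^n: \operatorname{sign}(a_i^\top x^* )\,a_i^\top x\ge 0 \text{ for all } i \text{ with } a_i^\top x^*\neq 0;\ a_i^\top x=0 \text{ for all } i \text{ with } a_i^\top x^*=0\}$ and the polytope (spindle) $S(A,x^* )=C(A,x^* )\cap(x^*-C(A,x^* ))$. *)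

theory Defs
  imports "HOL-Analysis.Analysis"
begin

definition cone_C :: "real^'n^'m \<Rightarrow> real^'n \<Rightarrow> (real^'n) set" where
  "cone_C A xs = {x. \<forall>i. (A$i \<bullet> xs \<noteq> 0 \<longrightarrow> sgn (A$i \<bullet> xs) * (A$i \<bullet> x) \<ge> 0)
                       \<and> (A$i \<bullet> xs = 0 \<longrightarrow> A$i \<bullet> x = 0)}"

definition spindle :: "real^'n^'m \<Rightarrow> real^'n \<Rightarrow> (real^'n) set" where
  "spindle A xs = cone_C A xs \<inter> (\<lambda>c. xs - c) ` cone_C A xs"

end

theory Submission
  imports Defs
begin

(* Write S for S(A,y).  A point x lies in S iff every a_i x lies between 0 and a_i y, and
   the points of S agreeing with a fixed p on all rows where a_i p = a_i y (resp. a_i p = 0)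
   form a face of S through y and p (resp. through 0 and p), whose dimension is bounded by
   the dimension of the common kernel of those rows.  So it suffices to find p in S whose
   "top" rows have kernel dimension at most d and whose "zero" rows have kernel dimension at
   most k - d, and then to enlarge both faces to the exact dimensions.

   Such a p is obtained by maximising c x = sum_i (a_i y) (a_i x) over the compact set X of
   points whose zero rows have kernel dimension at most k - d, at a vertex z of S.  If the top
   rows of z had kernel dimension above d, the c-maximal vertex w of S cut by a small
   half-space around z leaning towards y would lie on an edge of S at z: its top and zero
   kernels meet in dimension at most 1, and they only grow from z to w, which forces w into X
   although c w > c z. *)

lemma face_of_polyhedron_extend:
  fixes S :: "'a::euclidean_space set"
  assumes "polyhedron S" "F face_of S" "F \<noteq> {}" "aff_dim F \<le> e" "e \<le> aff_dim S"
  obtains G where "G face_of S" "F \<subseteq> G" "aff_dim G = e"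
  using assms
proof (induction "nat (aff_dim S - e)" arbitrary: S thesis)
  case 0
  then have "aff_dim S = e" by simp
  then show ?case
    using "0.prems" face_of_refl face_of_imp_subset polyhedron_imp_convex by metis
next
  case (Suc m)
  then have "F \<noteq> S" by auto
  then obtain H where H: "H facet_of S" "F \<subseteq> H"
    using face_of_polyhedron_subset_facet Suc.prems(2-4) by blast
  then have HS: "H face_of S" and dimH: "aff_dim H = aff_dim S - 1"
    by (auto simp: facet_of_def)
  have polyH: "polyhedron H"
    using face_of_polyhedron_polyhedron Suc.prems(2) HS by blast
  have FH: "F face_of H"
    using Suc.prems(3) H(2) HS face_of_subset face_of_imp_subset by blast
  have "m = nat (aff_dim H - e)" "e \<le> aff_dim H"
    using Suc.hyps(2) dimH by auto
  then obtain G where "G face_of H" "F \<subseteq> G" "aff_dim G = e"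
    using Suc.hyps(1)[OF _ _ polyH FH Suc.prems(4,5)] by blast
  then show ?case
    using Suc.prems(1) HS face_of_trans by blast
qed

lemma extreme_point_exists_maximizing:
  fixes S :: "'a::euclidean_space set"
  assumes "compact S" "convex S" "S \<noteq> {}"
  obtains x where "x extreme_point_of S" "\<And>z. z \<in> S \<Longrightarrow> c \<bullet> z \<le> c \<bullet> x"
proof -
  have "continuous_on S (\<lambda>z. c \<bullet> z)"
    by (intro continuous_intros)
  then obtain m where m: "m \<in> S" "\<And>z. z \<in> S \<Longrightarrow> c \<bullet> z \<le> c \<bullet> m"
    using continuous_attains_sup[OF assms(1,3)] by blast
  define M where "M = S \<inter> {z. c \<bullet> z = c \<bullet> m}"
  have face: "M face_of S"
    unfolding M_def using face_of_Int_supporting_hyperplane_le[OF assms(2)] m(2) by blast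
  have "compact M" "convex M" "M \<noteq> {}"
    using assms(1,2) m(1) unfolding M_def
    by (auto intro: compact_Int_closed closed_hyperplane convex_Int convex_hyperplane)
  then obtain x where "x extreme_point_of M"
    using extreme_point_exists_convex by blast
  then show ?thesis
    using that extreme_point_of_face[OF face] m(2) by (auto simp: M_def)
qed

lemma extreme_point_of_imp_no_line:
  fixes S :: "'a::real_normed_vector set"
  assumes "x extreme_point_of S" "\<forall>\<^sub>F t in at 0. x + t *\<^sub>R u \<in> S"
  shows "u = 0"
proof (rule ccontr)
  assume "u \<noteq> 0"
  obtain e where "e > 0" and e: "\<And>t. t \<noteq> 0 \<Longrightarrow> \<bar>t\<bar> < e \<Longrightarrow> x + t *\<^sub>R u \<in> S"
    using assms(2) unfolding eventually_at by (auto simp: dist_real_def)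
  define a b where "a = x + (e/2) *\<^sub>R u" and "b = x + (- e/2) *\<^sub>R u"
  have "a \<in> S" "b \<in> S"
    using e[of "e/2"] e[of "- (e/2)"] \<open>e > 0\<close> by (simp_all add: a_def b_def)
  moreover have "x \<in> open_segment a b"
  proof -
    have "a - b = e *\<^sub>R u"
      by (simp add: a_def b_def flip: scaleR_add_left)
    then have "a \<noteq> b"
      using \<open>u \<noteq> 0\<close> \<open>e > 0\<close> by auto
    moreover have "x = midpoint a b"
      by (simp add: midpoint_def a_def b_def algebra_simps flip: scaleR_add_left)
    ultimately show ?thesis
      using midpoint_in_open_segment by metis
  qed
  ultimately show False
    using assms(1) by (auto simp: extreme_point_of_def)
qed

lemma dim_add_le_dim_Int:
  fixes U :: "'a::euclidean_space set"
  assumes "subspace U" "subspace V" "subspace W" "U \<subseteq> W" "V \<subseteq> W"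
  shows "dim U + dim V \<le> dim W + dim (U \<inter> V)"
proof -
  have "{x + y |x y. x \<in> U \<and> y \<in> V} \<subseteq> W"
    using assms(3-5) subspace_add by blast
  then have "dim {x + y |x y. x \<in> U \<and> y \<in> V} \<le> dim W"
    by (rule dim_subset)
  then show ?thesis
    using dim_sums_Int[OF assms(1,2)] by linarith
qed

lemma dim_le_1_if_Int_hyperplane_trivial:
  fixes U :: "'a::euclidean_space set"
  assumes "subspace U" "U \<inter> {u. a \<bullet> u = 0} \<subseteq> {0}"
  shows "dim U \<le> 1"
proof (cases "a = 0")
  case True
  then have "dim U = 0"
    using assms(2) by simp
  then show ?thesis
    by linarith
next
  case False
  have "dim U + dim {u. a \<bullet> u = 0} \<le> dim (UNIV :: 'a set) + dim (U \<inter> {u. a \<bullet> u = 0})"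
    using dim_add_le_dim_Int[OF assms(1) subspace_hyperplane subspace_UNIV] by blast
  moreover have "dim (U \<inter> {u. a \<bullet> u = 0}) = 0"
    using assms(2) by simp
  ultimately show ?thesis
    using dim_hyperplane[OF False] DIM_positive by simp
qed

lemma compact_pos_lower_bound:
  fixes f :: "'a::topological_space \<Rightarrow> real"
  assumes "compact V" "continuous_on V f" "\<And>x. x \<in> V \<Longrightarrow> 0 < f x"
  obtains e where "0 < e" "\<And>x. x \<in> V \<Longrightarrow> e < f x"
proof (cases "V = {}")
  case True
  then show ?thesis
    using that[of 1] by simp
next
  case False
  then obtain x0 where "x0 \<in> V" "\<And>x. x \<in> V \<Longrightarrow> f x0 \<le> f x"
    using continuous_attains_inf[OF assms(1) _ assms(2)] by blast
  moreover have "0 < f x0"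
    using assms(3) \<open>x0 \<in> V\<close> by blast
  ultimately show ?thesis
    using that[of "f x0 / 2"] by fastforce
qed

lemma mem_spindle_iff:
  "x \<in> spindle A y \<longleftrightarrow> (\<forall>i. min 0 (A$i \<bullet> y) \<le> A$i \<bullet> x \<and> A$i \<bullet> x \<le> max 0 (A$i \<bullet> y))"
proof -
  have row: "((r \<noteq> 0 \<longrightarrow> sgn r * s \<ge> 0) \<and> (r = 0 \<longrightarrow> s = 0))
      \<and> ((r \<noteq> 0 \<longrightarrow> sgn r * (r - s) \<ge> 0) \<and> (r = 0 \<longrightarrow> r - s = 0))
      \<longleftrightarrow> min 0 r \<le> s \<and> s \<le> max 0 r" for r s :: real
    by (cases "r > 0"; cases "r < 0") auto
  have "x \<in> (\<lambda>c. y - c) ` cone_C A y \<longleftrightarrow> y - x \<in> cone_C A y"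
    by (auto intro!: image_eqI[where x = "y - x"])
  then show ?thesis
    unfolding spindle_def cone_C_def Int_iff mem_Collect_eq inner_diff_right row [symmetric]
    by blast
qed

lemma spindle_row_bounds:
  assumes "x \<in> spindle A y"
  shows "0 \<le> (A$i \<bullet> y) * (A$i \<bullet> x)" "(A$i \<bullet> y) * (A$i \<bullet> x) \<le> (A$i \<bullet> y) * (A$i \<bullet> y)"
    and "A$i \<bullet> y = 0 \<Longrightarrow> A$i \<bullet> x = 0"
  using assms[unfolded mem_spindle_iff, rule_format, of i]
  by (cases "A$i \<bullet> y \<ge> 0";
      force simp: min_def max_def zero_le_mult_iff mult_left_mono mult_left_mono_neg)+

lemma zero_mem_spindle: "0 \<in> spindle A y"
  by (simp add: mem_spindle_iff)

lemma self_mem_spindle: "y \<in> spindle A y"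
  by (simp add: mem_spindle_iff)

lemma polyhedron_spindle: "polyhedron (spindle A y)"
proof -
  have "spindle A y = (\<Inter>i. {x. min 0 (A$i \<bullet> y) \<le> A$i \<bullet> x} \<inter> {x. A$i \<bullet> x \<le> max 0 (A$i \<bullet> y)})"
    by (auto simp: mem_spindle_iff)
  then show ?thesis
    by (auto intro!: polyhedron_Inter polyhedron_Int polyhedron_halfspace_le polyhedron_halfspace_ge)
qed

lemma convex_spindle: "convex (spindle A y)"
  using polyhedron_spindle polyhedron_imp_convex by blast

lemma bounded_spindle:
  fixes A :: "real^'n^'m"
  assumes "rank A = CARD('n)"
  shows "bounded (spindle A y)"
proof -
  obtain e where "e > 0" and e: "\<And>x. e * norm x \<le> norm (A *v x)"
    using injective_imp_isometric[of UNIV "(*v) A"] assms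
    by (auto simp: full_rank_injective matrix_vector_mul_bounded_linear inj_on_def)
  have "norm (A *v x) \<le> norm (A *v y)" if "x \<in> spindle A y" for x
  proof (rule norm_le_componentwise_cart)
    fix i
    show "norm ((A *v x)$i) \<le> norm ((A *v y)$i)"
      using that[unfolded mem_spindle_iff, rule_format, of i]
      by (auto simp: matrix_vector_mul_component min_def max_def split: if_splits)
  qed
  then have "norm x \<le> norm (A *v y) / e" if "x \<in> spindle A y" for x
    using that e[of x] \<open>e > 0\<close> by (simp add: field_simps) (meson order_trans)
  then show ?thesis
    by (auto simp: bounded_iff)
qed

lemma compact_spindle:
  fixes A :: "real^'n^'m"
  assumes "rank A = CARD('n)"
  shows "compact (spindle A y)"
  using bounded_spindle[OF assms] polyhedron_spindle polyhedron_imp_closed compact_eq_bounded_closed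
  by blast

definition row_kernel :: "real^'n^'m \<Rightarrow> 'm set \<Rightarrow> (real^'n) set" where
  "row_kernel A T = {v. \<forall>i\<in>T. A$i \<bullet> v = 0}"

definition agree_rows :: "real^'n^'m \<Rightarrow> real^'n \<Rightarrow> real^'n \<Rightarrow> 'm set" where
  "agree_rows A y x = {i. A$i \<bullet> x = A$i \<bullet> y}"

definition spindle_weight :: "real^'n^'m \<Rightarrow> real^'n \<Rightarrow> 'm set \<Rightarrow> real^'n" where
  "spindle_weight A y T = (\<Sum>i\<in>T. (A$i \<bullet> y) *\<^sub>R A$i)"

lemma subspace_row_kernel: "subspace (row_kernel A T)"
  unfolding subspace_def row_kernel_def by (auto simp: inner_add_right)

lemma row_kernel_antimono: "T \<subseteq> U \<Longrightarrow> row_kernel A U \<subseteq> row_kernel A T"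
  unfolding row_kernel_def by auto

lemma dim_row_kernel_antimono: "T \<subseteq> U \<Longrightarrow> dim (row_kernel A U) \<le> dim (row_kernel A T)"
  by (simp add: dim_subset row_kernel_antimono)

lemma row_kernel_Un: "row_kernel A (T \<union> U) = row_kernel A T \<inter> row_kernel A U"
  unfolding row_kernel_def by auto

lemma row_kernel_UNIV:
  fixes A :: "real^'n^'m"
  assumes "rank A = CARD('n)"
  shows "row_kernel A UNIV = {0}"
proof -
  have "u = 0" if "A *v u = A *v 0" for u
    using that assms full_rank_injective injD by metis
  then show ?thesis
    by (auto simp: row_kernel_def vec_eq_iff matrix_vector_mul_component)
qed

lemma zero_agree_rows_subset:
  assumes "x \<in> spindle A y"
  shows "agree_rows A 0 y \<subseteq> agree_rows A 0 x \<inter> agree_rows A y x"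
  using spindle_row_bounds(3)[OF assms] by (auto simp: agree_rows_def)

lemma inner_spindle_weight: "spindle_weight A y T \<bullet> x = (\<Sum>i\<in>T. (A$i \<bullet> y) * (A$i \<bullet> x))"
  by (simp add: spindle_weight_def inner_sum_left)

lemma spindle_weight_bounds:
  assumes "x \<in> spindle A y"
  shows "0 \<le> spindle_weight A y T \<bullet> x" "spindle_weight A y T \<bullet> x \<le> spindle_weight A y T \<bullet> y"
  unfolding inner_spindle_weight using spindle_row_bounds[OF assms]
  by (auto intro: sum_nonneg sum_mono)

lemma spindle_weight_eq_0_iff:
  assumes "x \<in> spindle A y"
  shows "spindle_weight A y T \<bullet> x = 0 \<longleftrightarrow> T \<subseteq> agree_rows A 0 x"
proof -
  have "spindle_weight A y T \<bullet> x = 0 \<longleftrightarrow> (\<forall>i\<in>T. (A$i \<bullet> y) * (A$i \<bullet> x) = 0)"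
    unfolding inner_spindle_weight
    using spindle_row_bounds(1)[OF assms] by (simp add: sum_nonneg_eq_0_iff)
  also have "\<dots> \<longleftrightarrow> T \<subseteq> agree_rows A 0 x"
    using spindle_row_bounds(3)[OF assms] by (auto simp: agree_rows_def)
  finally show ?thesis .
qed

lemma spindle_weight_eq_top_iff:
  assumes "x \<in> spindle A y"
  shows "spindle_weight A y T \<bullet> x = spindle_weight A y T \<bullet> y \<longleftrightarrow> T \<subseteq> agree_rows A y x"
proof -
  have "spindle_weight A y T \<bullet> y - spindle_weight A y T \<bullet> x
      = (\<Sum>i\<in>T. (A$i \<bullet> y) * (A$i \<bullet> y - A$i \<bullet> x))"
    by (simp add: inner_spindle_weight right_diff_distrib sum_subtractf)
  then have "spindle_weight A y T \<bullet> x = spindle_weight A y T \<bullet> y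
      \<longleftrightarrow> (\<Sum>i\<in>T. (A$i \<bullet> y) * (A$i \<bullet> y - A$i \<bullet> x)) = 0"
    by linarith
  also have "\<dots> \<longleftrightarrow> (\<forall>i\<in>T. (A$i \<bullet> y) * (A$i \<bullet> y - A$i \<bullet> x) = 0)"
    using spindle_row_bounds(2)[OF assms] by (intro sum_nonneg_eq_0_iff) (auto simp: right_diff_distrib)
  also have "\<dots> \<longleftrightarrow> T \<subseteq> agree_rows A y x"
    using spindle_row_bounds(3)[OF assms] by (auto simp: agree_rows_def)
  finally show ?thesis .
qed

lemma face_of_spindle_agree_top:
  "{x \<in> spindle A y. T \<subseteq> agree_rows A y x} face_of spindle A y"
proof -
  have "{x \<in> spindle A y. T \<subseteq> agree_rows A y x}
      = spindle A y \<inter> {x. spindle_weight A y T \<bullet> x = spindle_weight A y T \<bullet> y}"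
    using spindle_weight_eq_top_iff by blast
  then show ?thesis
    using face_of_Int_supporting_hyperplane_le[OF convex_spindle] spindle_weight_bounds(2)
    by metis
qed

lemma face_of_spindle_agree_zero:
  "{x \<in> spindle A y. T \<subseteq> agree_rows A 0 x} face_of spindle A y"
proof -
  have "{x \<in> spindle A y. T \<subseteq> agree_rows A 0 x}
      = spindle A y \<inter> {x. spindle_weight A y T \<bullet> x = 0}"
    using spindle_weight_eq_0_iff by blast
  then show ?thesis
    using face_of_Int_supporting_hyperplane_ge[OF convex_spindle] spindle_weight_bounds(1)
    by metis
qed

lemma aff_dim_spindle:
  "aff_dim (spindle A y) = int (dim (row_kernel A (agree_rows A 0 y)))"
proof -
  define N where "N = row_kernel A (agree_rows A 0 y)"
  define U where "U = (\<Inter>i\<in>{i. A$i \<bullet> y \<noteq> 0}.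
      {x. min 0 (A$i \<bullet> y) < A$i \<bullet> x} \<inter> {x. A$i \<bullet> x < max 0 (A$i \<bullet> y)})"
  have "spindle A y \<subseteq> N"
    using zero_agree_rows_subset by (fastforce simp: N_def row_kernel_def agree_rows_def)
  moreover have "N \<inter> U \<subseteq> spindle A y"
  proof
    fix x
    assume x: "x \<in> N \<inter> U"
    have "min 0 (A$i \<bullet> y) \<le> A$i \<bullet> x \<and> A$i \<bullet> x \<le> max 0 (A$i \<bullet> y)" for i
      using x by (cases "A$i \<bullet> y = 0") (auto simp: N_def U_def row_kernel_def agree_rows_def)
    then show "x \<in> spindle A y"
      by (simp add: mem_spindle_iff)
  qed
  moreover have "aff_dim (N \<inter> U) = aff_dim N"
  proof (rule aff_dim_openin)
    show "openin (top_of_set N) (N \<inter> U)"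
      unfolding U_def
      by (intro openin_open_Int open_INT) (auto intro!: open_Int open_halfspace_gt open_halfspace_lt)
    show "affine N"
      by (simp add: N_def subspace_imp_affine subspace_row_kernel)
    have "(1/2) *\<^sub>R y \<in> N \<inter> U"
      by (auto simp: N_def U_def row_kernel_def agree_rows_def min_def max_def)
    then show "N \<inter> U \<noteq> {}"
      by blast
  qed
  ultimately have "aff_dim (spindle A y) = aff_dim N"
    using aff_dim_subset by (metis order_antisym)
  then show ?thesis
    by (simp add: N_def aff_dim_subspace subspace_row_kernel)
qed

lemma closed_dim_row_kernel_le: "closed {x. dim (row_kernel A (agree_rows A 0 x)) \<le> m}"
proof -
  have "{x. dim (row_kernel A (agree_rows A 0 x)) \<le> m}
      = \<Union> (row_kernel A ` {T. dim (row_kernel A T) \<le> m})"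
  proof (intro equalityI subsetI)
    fix x
    assume "x \<in> {x. dim (row_kernel A (agree_rows A 0 x)) \<le> m}"
    moreover have "x \<in> row_kernel A (agree_rows A 0 x)"
      by (simp add: row_kernel_def agree_rows_def)
    ultimately show "x \<in> \<Union> (row_kernel A ` {T. dim (row_kernel A T) \<le> m})"
      by blast
  next
    fix x
    assume "x \<in> \<Union> (row_kernel A ` {T. dim (row_kernel A T) \<le> m})"
    then obtain T where "dim (row_kernel A T) \<le> m" "T \<subseteq> agree_rows A 0 x"
      by (auto simp: row_kernel_def agree_rows_def)
    then show "x \<in> {x. dim (row_kernel A (agree_rows A 0 x)) \<le> m}"
      using dim_row_kernel_antimono[of T "agree_rows A 0 x" A] by simp
  qed
  then show ?thesis
    by (simp add: closed_Union closed_subspace subspace_row_kernel)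
qed

lemma spindle_line_eventually:
  assumes "x \<in> spindle A y" "u \<in> row_kernel A (agree_rows A y x \<union> agree_rows A 0 x)"
  shows "\<forall>\<^sub>F t in at 0. x + t *\<^sub>R u \<in> spindle A y"
  unfolding mem_spindle_iff
proof (rule eventually_all_finite)
  fix i
  let ?lo = "min 0 (A$i \<bullet> y)" and ?hi = "max 0 (A$i \<bullet> y)"
  show "\<forall>\<^sub>F t in at 0. ?lo \<le> A$i \<bullet> (x + t *\<^sub>R u) \<and> A$i \<bullet> (x + t *\<^sub>R u) \<le> ?hi"
  proof (cases "A$i \<bullet> u = 0")
    case True
    then show ?thesis
      using assms(1) by (simp add: inner_add_right mem_spindle_iff)
  next
    case False
    then have "A$i \<bullet> x \<noteq> A$i \<bullet> y" "A$i \<bullet> x \<noteq> 0"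
      using assms(2) by (auto simp: row_kernel_def agree_rows_def)
    then have "?lo < A$i \<bullet> x" "A$i \<bullet> x < ?hi"
      using assms(1)[unfolded mem_spindle_iff, rule_format, of i]
      by (auto simp: min_def max_def split: if_splits)
    moreover have "((\<lambda>t. A$i \<bullet> (x + t *\<^sub>R u)) \<longlongrightarrow> A$i \<bullet> x) (at 0)"
      by (auto simp: inner_add_right intro!: tendsto_eq_intros)
    ultimately have "\<forall>\<^sub>F t in at 0. ?lo < A$i \<bullet> (x + t *\<^sub>R u) \<and> A$i \<bullet> (x + t *\<^sub>R u) < ?hi"
      by (intro eventually_conj order_tendstoD(1,2)) auto
    then show ?thesis
      by (rule eventually_mono) auto
  qed
qed

lemma row_kernel_extreme_point_spindle:
  assumes "x extreme_point_of spindle A y"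
  shows "row_kernel A (agree_rows A y x \<union> agree_rows A 0 x) = {0}"
proof -
  have "x \<in> spindle A y"
    using assms extreme_point_of_def by blast
  then have "u = 0" if "u \<in> row_kernel A (agree_rows A y x \<union> agree_rows A 0 x)" for u
    using extreme_point_of_imp_no_line[OF assms] spindle_line_eventually that by blast
  then show ?thesis
    using subspace_0[OF subspace_row_kernel] by blast
qed

lemma dim_row_kernel_extreme_point_spindle_Int_halfspace:
  assumes "x extreme_point_of (spindle A y \<inter> {z. a \<bullet> z \<le> b})"
  shows "dim (row_kernel A (agree_rows A y x \<union> agree_rows A 0 x)) \<le> 1"
proof (rule dim_le_1_if_Int_hyperplane_trivial[OF subspace_row_kernel])
  have x: "x \<in> spindle A y" "a \<bullet> x \<le> b"
    using assms by (auto simp: extreme_point_of_def)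
  show "row_kernel A (agree_rows A y x \<union> agree_rows A 0 x) \<inter> {u. a \<bullet> u = 0} \<subseteq> {0}"
  proof safe
    fix u
    assume u: "u \<in> row_kernel A (agree_rows A y x \<union> agree_rows A 0 x)" "a \<bullet> u = 0"
    have "\<forall>\<^sub>F t in at 0. x + t *\<^sub>R u \<in> spindle A y \<inter> {z. a \<bullet> z \<le> b}"
      using spindle_line_eventually[OF x(1) u(1)]
      by (rule eventually_mono) (use x(2) u(2) in \<open>simp add: inner_add_right\<close>)
    then show "u = 0"
      using extreme_point_of_imp_no_line[OF assms] by blast
  qed
qed

(* For a vertex z, the points of S with gauge at most e form a neighbourhood of z in S
   cut out by a single extra half-space. *)
definition vertex_gauge :: "real^'n^'m \<Rightarrow> real^'n \<Rightarrow> real^'n \<Rightarrow> real^'n \<Rightarrow> real" where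
  "vertex_gauge A y z x =
     spindle_weight A y (agree_rows A 0 z) \<bullet> x + spindle_weight A y (agree_rows A y z) \<bullet> (y - x)"

lemma vertex_gauge_eq_inner:
  "vertex_gauge A y z x =
     (spindle_weight A y (agree_rows A 0 z) - spindle_weight A y (agree_rows A y z)) \<bullet> x
     + spindle_weight A y (agree_rows A y z) \<bullet> y"
  by (simp add: vertex_gauge_def inner_diff_left inner_diff_right)

lemma vertex_gauge_nonneg:
  assumes "x \<in> spindle A y"
  shows "0 \<le> vertex_gauge A y z x"
  using spindle_weight_bounds[OF assms] by (simp add: vertex_gauge_def inner_diff_right add_nonneg_nonneg)

lemma vertex_gauge_eq_0_iff:
  assumes "x \<in> spindle A y"
  shows "vertex_gauge A y z x = 0
    \<longleftrightarrow> agree_rows A y z \<subseteq> agree_rows A y x \<and> agree_rows A 0 z \<subseteq> agree_rows A 0 x"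
proof -
  have "vertex_gauge A y z x = 0 \<longleftrightarrow> spindle_weight A y (agree_rows A 0 z) \<bullet> x = 0
      \<and> spindle_weight A y (agree_rows A y z) \<bullet> x = spindle_weight A y (agree_rows A y z) \<bullet> y"
    using spindle_weight_bounds[OF assms, of "agree_rows A 0 z"]
      spindle_weight_bounds[OF assms, of "agree_rows A y z"]
    by (auto simp: vertex_gauge_def inner_diff_right)
  then show ?thesis
    using spindle_weight_eq_0_iff[OF assms, of "agree_rows A 0 z"]
      spindle_weight_eq_top_iff[OF assms, of "agree_rows A y z"]
    by auto
qed

lemma vertex_gauge_pos:
  assumes z: "z extreme_point_of spindle A y" and x: "x \<in> spindle A y" "x \<noteq> z"
  shows "0 < vertex_gauge A y z x"
proof -
  have "vertex_gauge A y z x \<noteq> 0"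
  proof
    assume "vertex_gauge A y z x = 0"
    then have "x - z \<in> row_kernel A (agree_rows A y z \<union> agree_rows A 0 z)"
      using vertex_gauge_eq_0_iff[OF x(1)]
      by (auto simp: row_kernel_def agree_rows_def inner_diff_right)
    then show False
      using row_kernel_extreme_point_spindle[OF z] x(2) by simp
  qed
  then show ?thesis
    using vertex_gauge_nonneg[OF x(1), where z = z] by linarith
qed

lemma vertex_gauge_neighbourhood:
  fixes A :: "real^'n^'m"
  assumes "rank A = CARD('n)" and z: "z extreme_point_of spindle A y"
  obtains e where "0 < e" "\<And>x. x \<in> spindle A y \<Longrightarrow> vertex_gauge A y z x \<le> e
      \<Longrightarrow> agree_rows A y x \<subseteq> agree_rows A y z \<and> agree_rows A 0 x \<subseteq> agree_rows A 0 z"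
proof -
  define V where "V = {x \<in> spindle A y.
      \<not> (agree_rows A y x \<subseteq> agree_rows A y z \<and> agree_rows A 0 x \<subseteq> agree_rows A 0 z)}"
  have "V = spindle A y \<inter> ((\<Union>i\<in>- agree_rows A y z. {x. A$i \<bullet> x = A$i \<bullet> y})
      \<union> (\<Union>i\<in>- agree_rows A 0 z. {x. A$i \<bullet> x = 0}))"
    by (auto simp: V_def agree_rows_def)
  then have "compact V"
    using compact_spindle[OF assms(1)]
    by (auto intro!: compact_Int_closed closed_Un closed_UN closed_hyperplane)
  moreover have "continuous_on V (vertex_gauge A y z)"
    unfolding vertex_gauge_eq_inner by (intro continuous_intros)
  moreover have "0 < vertex_gauge A y z x" if "x \<in> V" for x
    using that vertex_gauge_pos[OF z] by (auto simp: V_def)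
  ultimately obtain e where "0 < e" "\<And>x. x \<in> V \<Longrightarrow> e < vertex_gauge A y z x"
    using compact_pos_lower_bound by blast
  then show ?thesis
    using that[of e] by (force simp: V_def)
qed

lemma spindle_ascent_near:
  assumes z: "z \<in> spindle A y" and not_top: "agree_rows A y z \<noteq> UNIV" and "0 < e"
  obtains q where "q \<in> spindle A y" "vertex_gauge A y z q \<le> e"
    "spindle_weight A y UNIV \<bullet> z < spindle_weight A y UNIV \<bullet> q"
proof -
  define c where "c = spindle_weight A y UNIV"
  define g where "g = vertex_gauge A y z"
  define t where "t = e / (g y + e)"
  define q where "q = (1 - t) *\<^sub>R z + t *\<^sub>R y"
  have "0 \<le> g y"
    unfolding g_def using vertex_gauge_nonneg[OF self_mem_spindle] .
  then have t: "0 < t" "t \<le> 1" "t * g y \<le> e"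
    using \<open>0 < e\<close> by (auto simp: t_def field_simps)
  have "g z = 0"
    unfolding g_def using vertex_gauge_eq_0_iff[OF z] by simp
  moreover have "g q = (1 - t) * g z + t * g y"
    by (simp add: g_def q_def vertex_gauge_eq_inner inner_add_right algebra_simps)
  ultimately have "g q \<le> e"
    using t by simp
  moreover have "q \<in> spindle A y"
    unfolding q_def using convexD_alt[OF convex_spindle z self_mem_spindle] t by simp
  moreover have "c \<bullet> z < c \<bullet> y"
    using spindle_weight_bounds(2)[OF z, of UNIV] spindle_weight_eq_top_iff[OF z, of UNIV] not_top
    by (auto simp: c_def)
  then have "c \<bullet> z < c \<bullet> q"
    using t by (simp add: q_def inner_add_right algebra_simps)
  ultimately show ?thesis
    using that by (simp add: c_def g_def)
qed

lemma spindle_vertex_ascent: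
  fixes A :: "real^'n^'m"
  assumes rank: "rank A = CARD('n)"
    and z: "z extreme_point_of spindle A y" and not_top: "agree_rows A y z \<noteq> UNIV"
  obtains w where "w \<in> spindle A y"
    "spindle_weight A y UNIV \<bullet> z < spindle_weight A y UNIV \<bullet> w"
    "agree_rows A y w \<subseteq> agree_rows A y z" "agree_rows A 0 w \<subseteq> agree_rows A 0 z"
    "dim (row_kernel A (agree_rows A y w \<union> agree_rows A 0 w)) \<le> 1"
proof -
  define c where "c = spindle_weight A y UNIV"
  define a where "a = spindle_weight A y (agree_rows A 0 z) - spindle_weight A y (agree_rows A y z)"
  define b where "b = spindle_weight A y (agree_rows A y z) \<bullet> y"
  have zS: "z \<in> spindle A y"
    using z extreme_point_of_def by blast
  obtain e where "0 < e" and e: "\<And>x. x \<in> spindle A y \<Longrightarrow> vertex_gauge A y z x \<le> e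
      \<Longrightarrow> agree_rows A y x \<subseteq> agree_rows A y z \<and> agree_rows A 0 x \<subseteq> agree_rows A 0 z"
    using vertex_gauge_neighbourhood[OF rank z] by blast
  define C where "C = spindle A y \<inter> {x. a \<bullet> x \<le> e - b}"
  have C_eq: "C = {x \<in> spindle A y. vertex_gauge A y z x \<le> e}"
    by (auto simp: C_def a_def b_def vertex_gauge_eq_inner)
  have "compact C" "convex C"
    using compact_spindle[OF rank] convex_spindle unfolding C_def
    by (auto intro: compact_Int_closed closed_halfspace_le convex_Int convex_halfspace_le)
  moreover have "z \<in> C"
    using zS vertex_gauge_eq_0_iff[OF zS, of z] \<open>0 < e\<close> by (simp add: C_eq)
  ultimately obtain w where w: "w extreme_point_of C" "\<And>x. x \<in> C \<Longrightarrow> c \<bullet> x \<le> c \<bullet> w"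
    using extreme_point_exists_maximizing by blast
  have wS: "w \<in> spindle A y" "vertex_gauge A y z w \<le> e"
    using w(1) by (auto simp: extreme_point_of_def C_eq)
  obtain q where "q \<in> C" "c \<bullet> z < c \<bullet> q"
    using spindle_ascent_near[OF zS not_top \<open>0 < e\<close>] by (auto simp: C_eq c_def)
  then have "c \<bullet> z < c \<bullet> w"
    using w(2) by force
  moreover have "dim (row_kernel A (agree_rows A y w \<union> agree_rows A 0 w)) \<le> 1"
    using dim_row_kernel_extreme_point_spindle_Int_halfspace w(1) unfolding C_def by blast
  ultimately show ?thesis
    using that wS e unfolding c_def by blast
qed

lemma spindle_balanced_point:
  fixes A :: "real^'n^'m"
  assumes rank: "rank A = CARD('n)" and d: "d \<le> dim (row_kernel A (agree_rows A 0 y))"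
  obtains p where "p \<in> spindle A y" "dim (row_kernel A (agree_rows A y p)) \<le> d"
    "dim (row_kernel A (agree_rows A 0 p)) + d \<le> dim (row_kernel A (agree_rows A 0 y))"
proof -
  define k where "k = dim (row_kernel A (agree_rows A 0 y))"
  define c where "c = spindle_weight A y UNIV"
  define X where "X = spindle A y \<inter> {x. dim (row_kernel A (agree_rows A 0 x)) \<le> k - d}"
  have "compact X"
    unfolding X_def using compact_spindle[OF rank] closed_dim_row_kernel_le
    by (rule compact_Int_closed)
  moreover have "0 \<in> X"
    using zero_mem_spindle row_kernel_UNIV[OF rank] by (simp add: X_def agree_rows_def)
  moreover have "continuous_on X (\<lambda>x. c \<bullet> x)"
    by (intro continuous_intros)
  ultimately obtain z0 where z0: "z0 \<in> X" "\<And>x. x \<in> X \<Longrightarrow> c \<bullet> x \<le> c \<bullet> z0"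
    using continuous_attains_sup[of X] by blast
  define F where "F = {x \<in> spindle A y. agree_rows A 0 z0 \<subseteq> agree_rows A 0 x}"
  have F: "F face_of spindle A y"
    unfolding F_def by (rule face_of_spindle_agree_zero)
  have "F \<subseteq> X"
  proof
    fix x
    assume "x \<in> F"
    then have "dim (row_kernel A (agree_rows A 0 x)) \<le> dim (row_kernel A (agree_rows A 0 z0))"
      by (simp add: F_def dim_row_kernel_antimono)
    then show "x \<in> X"
      using z0(1) \<open>x \<in> F\<close> by (simp add: F_def X_def)
  qed
  have "compact F" "convex F" "z0 \<in> F"
    using face_of_imp_compact[OF convex_spindle compact_spindle[OF rank] F] face_of_imp_convex[OF F]
      z0(1) by (auto simp: F_def X_def)
  then obtain z where z: "z extreme_point_of F" "\<And>x. x \<in> F \<Longrightarrow> c \<bullet> x \<le> c \<bullet> z"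
    using extreme_point_exists_maximizing by blast
  then have z_vertex: "z extreme_point_of spindle A y" and "z \<in> X"
    using extreme_point_of_face[OF F] \<open>F \<subseteq> X\<close> by auto
  have z_max: "c \<bullet> x \<le> c \<bullet> z" if "x \<in> X" for x
    using z0 z(2) \<open>z0 \<in> F\<close> that by force
  show ?thesis
  proof (cases "dim (row_kernel A (agree_rows A y z)) \<le> d")
    case True
    then show ?thesis
      using that \<open>z \<in> X\<close> d by (force simp: X_def k_def)
  next
    case False
    then have "agree_rows A y z \<noteq> UNIV"
      using row_kernel_UNIV[OF rank] by auto
    then obtain w where w: "w \<in> spindle A y" "c \<bullet> z < c \<bullet> w"
      "agree_rows A y w \<subseteq> agree_rows A y z"
      "dim (row_kernel A (agree_rows A y w \<union> agree_rows A 0 w)) \<le> 1"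
      using spindle_vertex_ascent[OF rank z_vertex] unfolding c_def by metis
    have "d < dim (row_kernel A (agree_rows A y w))"
      using False dim_row_kernel_antimono[OF w(3), of A] by linarith
    moreover have "dim (row_kernel A (agree_rows A y w)) + dim (row_kernel A (agree_rows A 0 w))
        \<le> k + dim (row_kernel A (agree_rows A y w \<union> agree_rows A 0 w))"
      unfolding k_def row_kernel_Un
      using zero_agree_rows_subset[OF w(1)]
      by (intro dim_add_le_dim_Int subspace_row_kernel row_kernel_antimono) auto
    ultimately have "w \<in> X"
      using w(1,4) by (simp add: X_def)
    then show ?thesis
      using z_max w(2) by force
  qed
qed

lemma aff_dim_agree_rows_le:
  "aff_dim {x \<in> X. T \<subseteq> agree_rows A v x} \<le> int (dim (row_kernel A T))"
proof -
  have "{x \<in> X. T \<subseteq> agree_rows A v x} \<subseteq> (+) v ` row_kernel A T"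
    by (force simp: agree_rows_def row_kernel_def inner_diff_right intro: image_eqI[where x = "_ - v"])
  then show ?thesis
    using aff_dim_subset aff_dim_translation_eq aff_dim_subspace[OF subspace_row_kernel] by metis
qed

theorem lemma6:
  fixes A :: "real^'n^'m" and xs ys :: "real^'n" and d :: int
  assumes "\<forall>i j. A$i$j \<in> \<int>"
    and "rank A = CARD('n)"
    and "ys \<in> spindle A xs"
    and "1 \<le> d" and "d \<le> aff_dim (spindle A ys)"
  shows "\<exists>F G. F face_of spindle A ys \<and> aff_dim F = d \<and> ys \<in> F
            \<and> G face_of spindle A ys \<and> aff_dim G = aff_dim (spindle A ys) - d \<and> 0 \<in> G
            \<and> F \<inter> G \<noteq> {}"
proof -
  have "nat d \<le> dim (row_kernel A (agree_rows A 0 ys))"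
    using assms(5) by (simp add: aff_dim_spindle nat_le_iff)
  then obtain p where p: "p \<in> spindle A ys" "dim (row_kernel A (agree_rows A ys p)) \<le> nat d"
    "dim (row_kernel A (agree_rows A 0 p)) + nat d \<le> dim (row_kernel A (agree_rows A 0 ys))"
    using spindle_balanced_point[OF assms(2)] by blast
  define F0 where "F0 = {x \<in> spindle A ys. agree_rows A ys p \<subseteq> agree_rows A ys x}"
  define G0 where "G0 = {x \<in> spindle A ys. agree_rows A 0 p \<subseteq> agree_rows A 0 x}"
  have F0: "F0 face_of spindle A ys" and G0: "G0 face_of spindle A ys"
    unfolding F0_def G0_def by (rule face_of_spindle_agree_top face_of_spindle_agree_zero)+
  have "ys \<in> F0" "p \<in> F0" "0 \<in> G0" "p \<in> G0"
    using p(1) self_mem_spindle zero_mem_spindle by (auto simp: F0_def G0_def agree_rows_def)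
  have "aff_dim F0 \<le> d" "aff_dim G0 \<le> aff_dim (spindle A ys) - d"
    using aff_dim_agree_rows_le[of "spindle A ys" "agree_rows A ys p" A ys]
      aff_dim_agree_rows_le[of "spindle A ys" "agree_rows A 0 p" A 0] p(2,3) assms(4)
    unfolding F0_def G0_def aff_dim_spindle by linarith+
  obtain F where "F face_of spindle A ys" "F0 \<subseteq> F" "aff_dim F = d"
    using face_of_polyhedron_extend[OF polyhedron_spindle F0 _ \<open>aff_dim F0 \<le> d\<close> assms(5)]
      \<open>ys \<in> F0\<close> by blast
  moreover obtain G where "G face_of spindle A ys" "G0 \<subseteq> G" "aff_dim G = aff_dim (spindle A ys) - d"
    using face_of_polyhedron_extend[OF polyhedron_spindle G0 _ \<open>aff_dim G0 \<le> aff_dim (spindle A ys) - d\<close>]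
      \<open>0 \<in> G0\<close> assms(4) by auto
  ultimately show ?thesis
    using \<open>ys \<in> F0\<close> \<open>p \<in> F0\<close> \<open>0 \<in> G0\<close> \<open>p \<in> G0\<close> by blast
qed

end
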